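(* Assume the setup in the context. Then $2\le K\le T$ always holds, and for every outcome with $T\le n-3$: (i) if $K\le T\le \frac{3K+2}{2}$, then $\displaystyle\sum_{i=T+1}^n v_i^2\le U_K(T)\,(1+|X_T|)^2$; (ii) if $\frac{3K+2}{2}\le T$, then $\displaystyle\sum_{i=T+1}^n v_i^2\le U_K\!\left(\tfrac{3K+2}{2}\right)(1+|X_T|)^2$, where $U_K(s):=\dfrac{(K+1)^2-s}{(2K+1)^2}$ for real $s$.
   Context: Let $n\ge4$ and let $v_1,\dots,v_n$ be real numbers with $\sum_{i=1}^n v_i^2\le1$ ordered so that $v_n\ge v_1\ge v_{n-1}\ge v_2\ge v_3\ge\cdots\ge v_{n-2}\ge0$. Let $\epsilon_1,\dots,\epsilon_n$ be independent Rademacher random variables ($\pm1$ with probability $\tfrac12$ each). For $t\in\{1,\dots,n-1\}$ put $X_t:=\sum_{i=1}^t v_i\epsilon_i$ and $Y_t:=\sum_{i=t+1}^n v_i\epsilon_i$, and for $t\in\{1,\dots,n\}$ put $M_t:=\sum_{i=1}^t v_i$. Define the random time $T:=\min\big(\{t\le n-1: |X_t|>1-v_{t+1}\}\cup\{n-1\}\big)$ and the deterministic index $K:=\min\big(\{t\le n-1: M_t>1-v_{t+1}\}\cup\{n-1\}\big)$. *)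

theory Defs
  imports Complex_Main
begin

text \<open>Vectors v_1..v_n and signs eps_1..eps_n are functions nat => real indexed from 1.
An outcome of the Rademacher variables is a sign vector eps with eps i in {-1,1}.\<close>

definition Xs :: "(nat \<Rightarrow> real) \<Rightarrow> (nat \<Rightarrow> real) \<Rightarrow> nat \<Rightarrow> real" where
  "Xs v eps t = (\<Sum>i=1..t. v i * eps i)"

definition Ys :: "nat \<Rightarrow> (nat \<Rightarrow> real) \<Rightarrow> (nat \<Rightarrow> real) \<Rightarrow> nat \<Rightarrow> real" where
  "Ys n v eps t = (\<Sum>i=t+1..n. v i * eps i)"

definition Ms :: "(nat \<Rightarrow> real) \<Rightarrow> nat \<Rightarrow> real" where
  "Ms v t = (\<Sum>i=1..t. v i)"

definition stopT :: "nat \<Rightarrow> (nat \<Rightarrow> real) \<Rightarrow> (nat \<Rightarrow> real) \<Rightarrow> nat" where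
  "stopT n v eps = Min ({t \<in> {1..n-1}. \<bar>Xs v eps t\<bar> > 1 - v (t+1)} \<union> {n-1})"

definition indexK :: "nat \<Rightarrow> (nat \<Rightarrow> real) \<Rightarrow> nat" where
  "indexK n v = Min ({t \<in> {1..n-1}. Ms v t > 1 - v (t+1)} \<union> {n-1})"

definition UK :: "nat \<Rightarrow> real \<Rightarrow> real" where
  "UK K s = ((real K + 1)^2 - s) / (2 * real K + 1)^2"

end

theory Submission
  imports Defs "HOL-Analysis.Convex"
begin

text \<open>
  With \<open>a = v (T+1)\<close>, the stopping rule gives \<open>\<bar>X_T\<bar> > 1 - a\<close>, so it suffices to bound the
  tail by \<open>1 - \<Sum>i\<le>T. v i\<^sup>2 \<le> U (2 - a)\<^sup>2\<close>. On the relevant range the \<open>v i\<close> decrease, so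
  \<open>\<Sum>i\<le>T. v i\<^sup>2 \<ge> T a\<^sup>2\<close>; and Cauchy-Schwarz applied to the crossing \<open>M_K > 1 - v (K+1)\<close>
  gives \<open>\<Sum>i\<le>K+1. v i\<^sup>2 \<ge> 1/(K+1)\<close> (or \<open>\<Sum>i\<le>K. v i\<^sup>2 \<ge> (1-a)\<^sup>2/K\<close> when \<open>T = K\<close>).
  In every case \<open>U_K(s) (2 - a)\<^sup>2\<close> minus the resulting bound is a convex quadratic in \<open>a\<close>
  vanishing at \<open>a = 1/(K+1)\<close>; its slope there is nonnegative iff \<open>s \<ge> (K+1)/2\<close> (used for
  larger \<open>a\<close>) and, with the first head bound, nonpositive iff \<open>s \<le> (3K+2)/2\<close> (used for
  smaller \<open>a\<close>), which is where the threshold \<open>(3K+2)/2\<close> comes from.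
\<close>

lemma sum_split_at:
  fixes f :: "nat \<Rightarrow> 'a::comm_monoid_add"
  assumes "m \<le> t + 1" "t \<le> n"
  shows "sum f {m..n} = sum f {m..t} + sum f {t+1..n}"
  using sum.ub_add_nat[OF assms(1), of f "n - t"] assms(2) by simp

lemma Min_first_hit_le:
  fixes N :: nat
  assumes "t \<in> {1..N}" "P t"
  shows "Min ({t \<in> {1..N}. P t} \<union> {N}) \<le> t"
proof (rule Min_le)
  show "finite ({t \<in> {1..N}. P t} \<union> {N})" by simp
qed (use assms in auto)

lemma Min_first_hit_cases:
  fixes N :: nat
  shows "Min ({t \<in> {1..N}. P t} \<union> {N}) = N \<or>
   Min ({t \<in> {1..N}. P t} \<union> {N}) \<in> {1..N} \<and> P (Min ({t \<in> {1..N}. P t} \<union> {N}))"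
proof -
  have "finite ({t \<in> {1..N}. P t} \<union> {N})" by simp
  then have "Min ({t \<in> {1..N}. P t} \<union> {N}) \<in> {t \<in> {1..N}. P t} \<union> {N}"
    by (rule Min_in) simp
  then show ?thesis by blast
qed

lemma indexK_le: "t \<in> {1..n-1} \<Longrightarrow> 1 - v (t+1) < Ms v t \<Longrightarrow> indexK n v \<le> t"
  unfolding indexK_def by (rule Min_first_hit_le)

lemma indexK_cases:
  "indexK n v = n - 1 \<or> indexK n v \<in> {1..n-1} \<and> 1 - v (indexK n v + 1) < Ms v (indexK n v)"
  unfolding indexK_def by (rule Min_first_hit_cases)

lemma stopT_cases:
  "stopT n v eps = n - 1 \<or>
   stopT n v eps \<in> {1..n-1} \<and> 1 - v (stopT n v eps + 1) < \<bar>Xs v eps (stopT n v eps)\<bar>"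
  unfolding stopT_def by (rule Min_first_hit_cases)

lemma abs_Xs_le_Ms:
  assumes "\<forall>i\<in>{1..t}. 0 \<le> v i \<and> \<bar>eps i\<bar> \<le> 1"
  shows "\<bar>Xs v eps t\<bar> \<le> Ms v t"
proof -
  have "\<bar>Xs v eps t\<bar> \<le> (\<Sum>i=1..t. \<bar>v i * eps i\<bar>)"
    unfolding Xs_def by (rule sum_abs)
  also have "\<dots> \<le> Ms v t"
    unfolding Ms_def using assms by (intro sum_mono) (auto simp: abs_mult intro: mult_left_le)
  finally show ?thesis .
qed

lemma UK_nonneg: "s \<le> (real K + 1)^2 \<Longrightarrow> 0 \<le> UK K s"
  unfolding UK_def by simp

lemma UK_sq_ge_above_tangent:
  fixes K :: nat and a s :: real
  assumes a: "1 \<le> (real K + 1) * a" and s: "(real K + 1) / 2 \<le> s"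
  shows "1 - s * a^2 \<le> UK K s * (2 - a)^2"
proof -
  define c e where "c = real K + 1" and "e = 2 * real K + 1"
  have c: "c > 0" and e: "e \<ge> 1" and ec: "e = 2*c - 1" unfolding c_def e_def by simp_all
  have U: "UK K s = (c^2 - s) / e^2" unfolding UK_def c_def e_def by simp
  have expand: "UK K s * (2 - a)^2 - (1 - s * a^2)
      = (UK K s + s) * (a - 1/c)^2 + 2 * (2*s - c) / e * (a - 1/c)"
    using c e unfolding U by (simp add: field_simps power2_eq_square) (simp add: ec algebra_simps)
  have "UK K s + s = (c^2 + s * (e^2 - 1)) / e^2"
    using e unfolding U by (simp add: field_simps)
  moreover have "0 \<le> s * (e^2 - 1)" using s e by simp
  ultimately have "0 \<le> UK K s + s" by simp
  moreover have "0 \<le> a - 1/c" using a c by (simp add: c_def field_simps)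
  moreover have "0 \<le> 2*s - c" using s by (simp add: c_def)
  ultimately have "0 \<le> (UK K s + s) * (a - 1/c)^2" "0 \<le> 2 * (2*s - c) / e * (a - 1/c)"
    using e by simp_all
  then show ?thesis using expand by linarith
qed

lemma UK_sq_ge_below_tangent:
  fixes K :: nat and a s :: real
  assumes a: "(real K + 1) * a \<le> 1" and s: "real K + 1 \<le> s" "s \<le> (3 * real K + 2) / 2"
  shows "1 - 1 / (real K + 1) - (s - (real K + 1)) * a^2 \<le> UK K s * (2 - a)^2"
proof -
  define c e where "c = real K + 1" and "e = 2 * real K + 1"
  have c: "c \<ge> 1" and e: "e \<ge> 1" and ec: "e = 2*c - 1" unfolding c_def e_def by simp_all
  have U: "UK K s = (c^2 - s) / e^2" unfolding UK_def c_def e_def by simp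
  have expand: "UK K s * (2 - a)^2 - (1 - 1/c - (s - c) * a^2)
      = (UK K s + s - c) * (a - 1/c)^2 + 2 * (2*s - (3*c - 1)) / e * (a - 1/c)"
    using c e unfolding U by (simp add: field_simps power2_eq_square) (simp add: ec algebra_simps)
  have "UK K s + s - c = (c^2 - c + (s - c) * (e^2 - 1)) / e^2"
    using e unfolding U by (simp add: field_simps)
  moreover have "0 \<le> c^2 - c" using c by (simp add: power2_eq_square)
  moreover have "0 \<le> (s - c) * (e^2 - 1)" using s e by (simp add: c_def)
  ultimately have "0 \<le> UK K s + s - c" by simp
  moreover have "a - 1/c \<le> 0" using a c by (simp add: c_def field_simps)
  moreover have "2*s - (3*c - 1) \<le> 0" using s by (simp add: c_def)
  ultimately have "0 \<le> (UK K s + s - c) * (a - 1/c)^2" "0 \<le> 2 * (2*s - (3*c - 1)) / e * (a - 1/c)"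
    using e by (simp_all add: mult_nonpos_nonpos)
  then show ?thesis using expand unfolding c_def by linarith
qed

lemma UK_self_sq_ge_below_tangent:
  fixes K :: nat and a :: real
  assumes K: "1 \<le> K" and a: "(real K + 1) * a \<le> 1"
  shows "1 - (1 - a)^2 / K \<le> UK K K * (2 - a)^2"
proof -
  define c e where "c = real K + 1" and "e = 2 * real K + 1"
  have c: "c \<ge> 1" and e: "e \<ge> 1" and ec: "e = 2*c - 1" "c = K + 1" and "real K \<noteq> 0"
    using K unfolding c_def e_def by simp_all
  have U: "UK K K = (c^2 - K) / e^2" unfolding UK_def c_def e_def by simp
  have expand: "UK K K * (2 - a)^2 - (1 - (1 - a)^2 / K)
      = (UK K K + 1/K) * (a - 1/c)^2 - 2 * (c + 1) / e * (a - 1/c)"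
    using c e \<open>real K \<noteq> 0\<close> unfolding U
    by (simp add: field_simps power2_eq_square) (simp add: ec algebra_simps)
  have "c \<le> c^2" using c by (simp add: power2_eq_square)
  then have "0 \<le> UK K K" by (intro UK_nonneg) (simp add: c_def)
  then have "0 \<le> (UK K K + 1/K) * (a - 1/c)^2" by simp
  moreover have "a - 1/c \<le> 0" using a c by (simp add: c_def field_simps)
  then have "0 \<le> - 2 * (c + 1) / e * (a - 1/c)" using c e by (simp add: mult_nonpos_nonpos)
  ultimately show ?thesis using expand by linarith
qed

locale ordered_unit_vector =
  fixes n :: nat and v :: "nat \<Rightarrow> real"
  assumes four_le_n: "n \<ge> 4"
    and sum_sq_le_1: "(\<Sum>i=1..n. (v i)^2) \<le> 1"
    and ord1: "v 1 \<le> v n" and ord2: "v (n-1) \<le> v 1" and ord3: "v 2 \<le> v (n-1)"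
    and ord4: "\<forall>i. 2 \<le> i \<and> i < n - 2 \<longrightarrow> v (i+1) \<le> v i"
    and ord5: "v (n-2) \<ge> 0"
begin

lemma v_antimono_middle:
  assumes "2 \<le> i" "i \<le> j" "j \<le> n - 2"
  shows "v j \<le> v i"
  using assms(2,3)
proof (induction j rule: dec_induct)
  case (step m)
  then have "v (Suc m) \<le> v m" using ord4 assms(1) by auto
  with step show ?case by simp
qed simp

lemma v_antimono:
  assumes "1 \<le> i" "i \<le> j" "2 \<le> j" "j \<le> n - 2"
  shows "v j \<le> v i"
proof (cases "i = 1")
  case True
  then show ?thesis using v_antimono_middle[of 2 j] assms ord2 ord3 by simp
qed (use assms v_antimono_middle in auto)

lemma v_nonneg: "i \<in> {1..n} \<Longrightarrow> 0 \<le> v i"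
proof -
  assume i: "i \<in> {1..n}"
  have "0 \<le> v 2" using v_antimono_middle[of 2 "n-2"] four_le_n ord5 by (simp add: le_diff_conv2)
  moreover have "2 \<le> i \<Longrightarrow> i \<le> n-2 \<Longrightarrow> 0 \<le> v i" using v_antimono_middle[of i "n-2"] ord5 by simp
  moreover have "i = 1 \<or> i = n-1 \<or> i = n \<or> (2 \<le> i \<and> i \<le> n-2)" using i by auto
  ultimately show "0 \<le> v i" using ord1 ord2 ord3 by auto
qed

lemma v_le_1: "i \<in> {1..n} \<Longrightarrow> v i \<le> 1"
proof -
  assume "i \<in> {1..n}"
  then have "(v i)^2 \<le> (\<Sum>i=1..n. (v i)^2)" by (intro member_le_sum) auto
  then show "v i \<le> 1" using sum_sq_le_1 abs_square_le_1[of "v i"] by simp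
qed

lemma two_le_indexK: "2 \<le> indexK n v"
proof (rule ccontr)
  assume "\<not> 2 \<le> indexK n v"
  moreover have "1 \<le> indexK n v" using indexK_cases[of n v] four_le_n by auto
  ultimately have "indexK n v = 1" by simp
  then have "1 < v 1 + v 2"
    using indexK_cases[of n v] four_le_n by (auto simp: Ms_def numeral_2_eq_2)
  then have "1 < (v 1 + v 2)^2" using v_nonneg[of 1] four_le_n by (simp add: power2_eq_square less_1_mult)
  also have "\<dots> \<le> 2 * ((v 1)^2 + (v 2)^2)"
    using sum_squared_le_sum_of_squares[of v "{1,2}"] by simp
  also have "\<dots> \<le> (v 1)^2 + (v 2)^2 + (v (n-1))^2 + (v n)^2"
  proof -
    have "(v 1)^2 \<le> (v n)^2" using ord1 v_nonneg[of 1] four_le_n by (intro power_mono) auto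
    moreover have "(v 2)^2 \<le> (v (n-1))^2" using ord3 v_nonneg[of 2] four_le_n by (intro power_mono) auto
    ultimately show ?thesis by simp
  qed
  also have "\<dots> = (\<Sum>i\<in>{1,2,n-1,n}. (v i)^2)" using four_le_n by simp
  also have "\<dots> \<le> (\<Sum>i=1..n. (v i)^2)" using four_le_n by (intro sum_mono2) auto
  also have "\<dots> \<le> 1" by (rule sum_sq_le_1)
  finally show False by simp
qed

end

locale rademacher_outcome = ordered_unit_vector +
  fixes eps :: "nat \<Rightarrow> real"
  assumes signs: "\<forall>i\<in>{1..n}. eps i = 1 \<or> eps i = -1"
begin

abbreviation K where "K \<equiv> indexK n v"
abbreviation T where "T \<equiv> stopT n v eps"

lemma indexK_le_stopT: "K \<le> T"
proof (cases "T = n - 1")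
  case True
  then show ?thesis using indexK_cases[of n v] by auto
next
  case False
  then have T: "T \<in> {1..n-1}" and "1 - v (T+1) < \<bar>Xs v eps T\<bar>"
    using stopT_cases[of n v eps] by auto
  moreover have "\<bar>Xs v eps T\<bar> \<le> Ms v T"
  proof (rule abs_Xs_le_Ms, intro ballI)
    fix i assume "i \<in> {1..T}"
    then have "i \<in> {1..n}" using T by auto
    moreover have "eps i = 1 \<or> eps i = -1" using signs \<open>i \<in> {1..n}\<close> by blast
    ultimately show "0 \<le> v i \<and> \<bar>eps i\<bar> \<le> 1" using v_nonneg by auto
  qed
  ultimately show ?thesis by (intro indexK_le) auto
qed

context
  assumes early: "T \<le> n - 3"
begin

lemma stopT_crossing: "1 - v (T+1) < \<bar>Xs v eps T\<bar>"
  using stopT_cases[of n v eps] early four_le_n by auto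

lemma indexK_crossing: "1 - v (K+1) < Ms v K"
  using indexK_cases[of n v] indexK_le_stopT early four_le_n by auto

lemma stop_value_bounds: "0 \<le> v (T+1)" "v (T+1) \<le> 1"
  using v_nonneg[of "T+1"] v_le_1[of "T+1"] early four_le_n by auto

lemma stop_value_le: "i \<in> {1..T} \<Longrightarrow> v (T+1) \<le> v i"
  using two_le_indexK indexK_le_stopT early by (intro v_antimono) auto

lemma head_ge_stop_value: "real T * (v (T+1))^2 \<le> (\<Sum>i=1..T. (v i)^2)"
proof -
  have "(\<Sum>i=1..T. (v (T+1))^2) \<le> (\<Sum>i=1..T. (v i)^2)"
    using stop_value_le stop_value_bounds by (intro sum_mono power_mono) auto
  then show ?thesis by simp
qed

lemma head_ge_at_indexK:
  assumes "T = K"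
  shows "(1 - v (T+1))^2 / K \<le> (\<Sum>i=1..T. (v i)^2)"
proof -
  have "0 \<le> 1 - v (T+1)" using stop_value_bounds by simp
  then have "(1 - v (T+1))^2 \<le> (Ms v K)^2"
    using indexK_crossing assms by (intro power_mono) auto
  also have "\<dots> \<le> (\<Sum>i=1..T. (v i)^2) * K"
    using sum_squared_le_sum_of_squares[of v "{1..K}"] assms by (simp add: Ms_def)
  finally show ?thesis using two_le_indexK by (simp add: divide_le_eq)
qed

lemma head_ge_past_indexK:
  assumes "K < T"
  shows "1 / (real K + 1) + (real T - (real K + 1)) * (v (T+1))^2 \<le> (\<Sum>i=1..T. (v i)^2)"
proof -
  have "1 < Ms v (K+1)" using indexK_crossing by (simp add: Ms_def)
  then have "1 < (Ms v (K+1))^2" by (simp add: less_1_mult power2_eq_square)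
  also have "\<dots> \<le> (\<Sum>i=1..K+1. (v i)^2) * (real K + 1)"
    using sum_squared_le_sum_of_squares[of v "{1..K+1}"] by (simp add: Ms_def add.commute)
  finally have "1 / (real K + 1) \<le> (\<Sum>i=1..K+1. (v i)^2)" by (simp add: divide_le_eq)
  moreover have "(real T - (real K + 1)) * (v (T+1))^2 \<le> (\<Sum>i=K+2..T. (v i)^2)"
  proof -
    have "(\<Sum>i=K+2..T. (v (T+1))^2) \<le> (\<Sum>i=K+2..T. (v i)^2)"
      using stop_value_le stop_value_bounds by (intro sum_mono power_mono) auto
    then show ?thesis using assms by (simp add: of_nat_diff add.commute)
  qed
  moreover have "(\<Sum>i=1..T. (v i)^2) = (\<Sum>i=1..K+1. (v i)^2) + (\<Sum>i=K+2..T. (v i)^2)"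
    using sum_split_at[of 1 "K+1" T] assms by simp
  ultimately show ?thesis by linarith
qed

lemma tail_le_UK_of_head_bound:
  assumes head: "1 - (\<Sum>i=1..T. (v i)^2) \<le> U * (2 - v (T+1))^2" and U: "0 \<le> U"
  shows "(\<Sum>i=T+1..n. (v i)^2) \<le> U * (1 + \<bar>Xs v eps T\<bar>)^2"
proof -
  have "(\<Sum>i=1..n. (v i)^2) = (\<Sum>i=1..T. (v i)^2) + (\<Sum>i=T+1..n. (v i)^2)"
    using early by (intro sum_split_at) auto
  then have "(\<Sum>i=T+1..n. (v i)^2) \<le> U * (2 - v (T+1))^2" using head sum_sq_le_1 by linarith
  also have "\<dots> \<le> U * (1 + \<bar>Xs v eps T\<bar>)^2"
    using stopT_crossing stop_value_bounds U by (intro mult_left_mono power_mono) auto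
  finally show ?thesis .
qed

lemma tail_le_UK:
  assumes s: "real K + 1 \<le> s" "s \<le> T" "s \<le> (3 * real K + 2) / 2"
  shows "(\<Sum>i=T+1..n. (v i)^2) \<le> UK K s * (1 + \<bar>Xs v eps T\<bar>)^2"
proof (rule tail_le_UK_of_head_bound)
  let ?a = "v (T+1)"
  show "1 - (\<Sum>i=1..T. (v i)^2) \<le> UK K s * (2 - ?a)^2"
  proof (cases "(real K + 1) * ?a \<le> 1")
    case True
    have "(s - (real K + 1)) * ?a^2 \<le> (real T - (real K + 1)) * ?a^2"
      using s by (intro mult_right_mono) auto
    then show ?thesis
      using head_ge_past_indexK UK_sq_ge_below_tangent[OF True s(1,3)] s by simp
  next
    case False
    have "s * ?a^2 \<le> T * ?a^2" using s by (intro mult_right_mono) auto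
    then show ?thesis
      using head_ge_stop_value UK_sq_ge_above_tangent[of K ?a s] False s by simp
  qed
  have "(3 * real K + 2) / 2 \<le> (real K + 1)^2" by (simp add: power2_eq_square algebra_simps)
  then show "0 \<le> UK K s" using s by (intro UK_nonneg) simp
qed

lemma tail_le_UK_at_indexK:
  assumes "T = K"
  shows "(\<Sum>i=T+1..n. (v i)^2) \<le> UK K K * (1 + \<bar>Xs v eps T\<bar>)^2"
proof (rule tail_le_UK_of_head_bound)
  let ?a = "v (T+1)"
  show "1 - (\<Sum>i=1..T. (v i)^2) \<le> UK K K * (2 - ?a)^2"
  proof (cases "(real K + 1) * ?a \<le> 1")
    case True
    then show ?thesis
      using head_ge_at_indexK UK_self_sq_ge_below_tangent[of K ?a] two_le_indexK assms by simp
  next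
    case False
    then show ?thesis
      using head_ge_stop_value UK_sq_ge_above_tangent[of K ?a K] two_le_indexK assms by simp
  qed
  show "0 \<le> UK K K" by (intro UK_nonneg) (simp add: power2_eq_square algebra_simps)
qed

end

end

theorem mainTheorem6:
  fixes n :: nat and v eps :: "nat \<Rightarrow> real"
  assumes n4: "n \<ge> 4"
    and norm: "(\<Sum>i=1..n. (v i)^2) \<le> 1"
    and ord1: "v 1 \<le> v n" and ord2: "v (n-1) \<le> v 1" and ord3: "v 2 \<le> v (n-1)"
    and ord4: "\<forall>i. 2 \<le> i \<and> i < n - 2 \<longrightarrow> v (i+1) \<le> v i"
    and ord5: "v (n-2) \<ge> 0"
    and eps: "\<forall>i\<in>{1..n}. eps i = 1 \<or> eps i = -1"
  shows "2 \<le> indexK n v \<and> indexK n v \<le> stopT n v eps \<and>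
    (stopT n v eps \<le> n - 3 \<longrightarrow>
      ((real (stopT n v eps) \<le> (3 * real (indexK n v) + 2) / 2 \<longrightarrow>
          (\<Sum>i=stopT n v eps + 1..n. (v i)^2)
            \<le> UK (indexK n v) (real (stopT n v eps)) * (1 + \<bar>Xs v eps (stopT n v eps)\<bar>)^2) \<and>
       ((3 * real (indexK n v) + 2) / 2 \<le> real (stopT n v eps) \<longrightarrow>
          (\<Sum>i=stopT n v eps + 1..n. (v i)^2)
            \<le> UK (indexK n v) ((3 * real (indexK n v) + 2) / 2) * (1 + \<bar>Xs v eps (stopT n v eps)\<bar>)^2)))"
proof -
  interpret rademacher_outcome n v eps
    using assms by unfold_locales
  have "(T \<le> (3 * real K + 2) / 2 \<longrightarrow>
           (\<Sum>i=T+1..n. (v i)^2) \<le> UK K T * (1 + \<bar>Xs v eps T\<bar>)^2) \<and>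
        ((3 * real K + 2) / 2 \<le> T \<longrightarrow>
           (\<Sum>i=T+1..n. (v i)^2) \<le> UK K ((3 * real K + 2) / 2) * (1 + \<bar>Xs v eps T\<bar>)^2)"
    if early: "T \<le> n - 3"
  proof (intro conjI impI)
    assume "T \<le> (3 * real K + 2) / 2"
    then show "(\<Sum>i=T+1..n. (v i)^2) \<le> UK K T * (1 + \<bar>Xs v eps T\<bar>)^2"
      using tail_le_UK_at_indexK[OF early] tail_le_UK[OF early, of T] indexK_le_stopT
      by (cases "T = K") auto
  next
    assume "(3 * real K + 2) / 2 \<le> T"
    then show "(\<Sum>i=T+1..n. (v i)^2) \<le> UK K ((3 * real K + 2) / 2) * (1 + \<bar>Xs v eps T\<bar>)^2"
      by (intro tail_le_UK[OF early]) auto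
  qed
  then show ?thesis using two_le_indexK indexK_le_stopT by blast
qed

end
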